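(* Let $k\ge1$ be an integer and $a,b,c,d\ge0$. Then (i) $(0,0)$ is a strict local minimum of $I$ on $H^1(\mathbb{R})\times H^1(\mathbb{R})$; (ii) for every $(u,v)\in\mathcal{N}$, $I(\ell u,\ell v)<0$ for all $\ell>0$ sufficiently large.
   Context: $H(u,v)=\frac{a}{2k+2}(u^{2k+2}+v^{2k+2})+\frac{b}{k+1}(uv)^{k+1}+\frac{c}{k}u^{k+2}v^k+\frac{d}{k}u^kv^{k+2}$; $I(u,v)=\frac12\int(u^2+v^2+u'^2+v'^2)dx-\int H(u,v)dx$; Nehari manifold $\mathcal{N}=\{(u,v)\in H^1\times H^1\setminus\{(0,0)\}: I'(u,v)(u,v)=0\}$. *)

theory Defs
  imports "HOL-Analysis.Analysis"
begin

definition test_fun :: "(real \<Rightarrow> real) \<Rightarrow> bool" where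
  "test_fun \<phi> \<longleftrightarrow> (\<forall>n x. ((deriv ^^ n) \<phi>) differentiable (at x)) \<and>
                   (\<exists>R. \<forall>x. \<bar>x\<bar> > R \<longrightarrow> \<phi> x = 0)"

definition L2 :: "(real \<Rightarrow> real) \<Rightarrow> bool" where
  "L2 u \<longleftrightarrow> u \<in> borel_measurable lborel \<and> integrable lborel (\<lambda>x. (u x)^2)"

definition weak_deriv :: "(real \<Rightarrow> real) \<Rightarrow> (real \<Rightarrow> real) \<Rightarrow> bool" where
  "weak_deriv u g \<longleftrightarrow> (\<forall>\<phi>. test_fun \<phi> \<longrightarrow>
      (LINT x|lborel. u x * deriv \<phi> x) = - (LINT x|lborel. g x * \<phi> x))"

definition H1 :: "(real \<Rightarrow> real) \<Rightarrow> (real \<Rightarrow> real) \<Rightarrow> bool" where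
  "H1 u u' \<longleftrightarrow> L2 u \<and> L2 u' \<and> weak_deriv u u'"

definition H1_norm2 :: "(real \<Rightarrow> real) \<Rightarrow> (real \<Rightarrow> real) \<Rightarrow> (real \<Rightarrow> real) \<Rightarrow> (real \<Rightarrow> real) \<Rightarrow> real" where
  "H1_norm2 u u' v v' = (LINT x|lborel. (u x)^2 + (v x)^2 + (u' x)^2 + (v' x)^2)"

definition Hfun :: "nat \<Rightarrow> real \<Rightarrow> real \<Rightarrow> real \<Rightarrow> real \<Rightarrow> real \<Rightarrow> real \<Rightarrow> real" where
  "Hfun k a b c d u v =
     a / (2 * real k + 2) * (u ^ (2*k+2) + v ^ (2*k+2))
     + b / (real k + 1) * (u * v) ^ (k+1)
     + c / real k * u ^ (k+2) * v ^ k
     + d / real k * u ^ k * v ^ (k+2)"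

definition Ifun :: "nat \<Rightarrow> real \<Rightarrow> real \<Rightarrow> real \<Rightarrow> real \<Rightarrow>
    (real \<Rightarrow> real) \<Rightarrow> (real \<Rightarrow> real) \<Rightarrow> (real \<Rightarrow> real) \<Rightarrow> (real \<Rightarrow> real) \<Rightarrow> real" where
  "Ifun k a b c d u u' v v' =
     1/2 * (LINT x|lborel. (u x)^2 + (v x)^2 + (u' x)^2 + (v' x)^2)
     - (LINT x|lborel. Hfun k a b c d (u x) (v x))"

text \<open>Nehari manifold: (u,v) \<noteq> (0,0) in H^1 x H^1 and I'(u,v)(u,v) = 0, where
  I'(u,v)(u,v) is the directional derivative d/dt I(u + t u, v + t v) at t = 0.\<close>
definition Nehari :: "nat \<Rightarrow> real \<Rightarrow> real \<Rightarrow> real \<Rightarrow> real \<Rightarrow>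
    (real \<Rightarrow> real) \<Rightarrow> (real \<Rightarrow> real) \<Rightarrow> (real \<Rightarrow> real) \<Rightarrow> (real \<Rightarrow> real) \<Rightarrow> bool" where
  "Nehari k a b c d u u' v v' \<longleftrightarrow>
     H1 u u' \<and> H1 v v' \<and> \<not> (AE x in lborel. u x = 0 \<and> v x = 0) \<and>
     ((\<lambda>t. Ifun k a b c d (\<lambda>x. u x + t * u x) (\<lambda>x. u' x + t * u' x)
                          (\<lambda>x. v x + t * v x) (\<lambda>x. v' x + t * v' x))
        has_real_derivative 0) (at 0)"

end

theory Submission
  imports Defs "HOL-Computational_Algebra.Polynomial"
begin

text \<open>
  (i) On the line, weak \<open>H\<^sup>1\<close> functions are essentially bounded. Testing the weak derivative
  against differences of smoothed ramps and passing to Lebesgue points gives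
  \<open>\<bar>u(a) - u(b)\<bar> \<le> \<integral>\<bar>u'\<bar>\<close> over \<open>[a, b + 2]\<close> for almost all \<open>a \<le> b\<close>; averaging over
  \<open>a \<in> [x, x + 1]\<close> and using AM-GM yields \<open>u(x)\<^sup>2 \<le> 9 A\<close> a.e., where \<open>A = \<parallel>(u, v)\<parallel>\<^sup>2\<close>.
  As \<open>H\<close> is \<open>(2k + 2)\<close>-homogeneous, \<open>\<integral>H(u, v) = O(A\<^sup>k\<^sup>+\<^sup>1)\<close>, which for \<open>k \<ge> 1\<close> is
  dominated near \<open>0\<close> by the quadratic part \<open>A/2\<close> of \<open>I\<close>.

  (ii) By homogeneity \<open>I(l u, l v) = l\<^sup>2 A/2 - l\<^sup>2\<^sup>k\<^sup>+\<^sup>2 B\<close> with \<open>B = \<integral>H(u, v)\<close>; differentiating at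
  \<open>l = 1\<close> shows that on the Nehari manifold \<open>A = (2k + 2) B\<close>, and \<open>A > 0\<close>.
\<close>

section \<open>Smooth functions on the real line\<close>

definition differentiable_upto :: "nat \<Rightarrow> (real \<Rightarrow> real) \<Rightarrow> bool" where
  "differentiable_upto n f \<longleftrightarrow> (\<forall>m\<le>n. \<forall>x. (deriv ^^ m) f differentiable (at x))"

definition smooth :: "(real \<Rightarrow> real) \<Rightarrow> bool" where
  "smooth f \<longleftrightarrow> (\<forall>n x. (deriv ^^ n) f differentiable (at x))"

lemma smooth_iff_differentiable_upto: "smooth f \<longleftrightarrow> (\<forall>n. differentiable_upto n f)"
  unfolding smooth_def differentiable_upto_def by blast

lemma differentiable_upto_0: "differentiable_upto 0 f \<longleftrightarrow> (\<forall>x. f differentiable (at x))"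
  by (simp add: differentiable_upto_def)

lemma differentiable_upto_Suc:
  "differentiable_upto (Suc n) f \<longleftrightarrow> (\<forall>x. f differentiable (at x)) \<and> differentiable_upto n (deriv f)"
  unfolding differentiable_upto_def less_Suc_eq_le[symmetric] All_less_Suc2
  by (simp add: funpow_Suc_right del: funpow.simps)

lemma differentiable_upto_Suc_iff:
  assumes "\<And>x. DERIV f x :> f' x"
  shows "differentiable_upto (Suc n) f \<longleftrightarrow> differentiable_upto n f'"
proof -
  have "deriv f = f'" using assms by (intro ext DERIV_imp_deriv)
  moreover have "\<forall>x. f differentiable (at x)" using assms real_differentiable_def by blast
  ultimately show ?thesis by (simp add: differentiable_upto_Suc)
qed

lemma differentiable_upto_DERIV: "differentiable_upto n f \<Longrightarrow> DERIV f x :> deriv f x"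
  by (auto simp: differentiable_upto_def DERIV_deriv_iff_real_differentiable)

lemma differentiable_upto_mono: "m \<le> n \<Longrightarrow> differentiable_upto n f \<Longrightarrow> differentiable_upto m f"
  by (auto simp: differentiable_upto_def)

lemma differentiable_upto_add:
  "differentiable_upto n f \<Longrightarrow> differentiable_upto n g \<Longrightarrow> differentiable_upto n (\<lambda>x. f x + g x)"
proof (induction n arbitrary: f g)
  case 0
  then show ?case by (simp add: differentiable_upto_0)
next
  case (Suc n)
  have D: "DERIV (\<lambda>x. f x + g x) x :> deriv f x + deriv g x" for x
    using Suc.prems by (intro DERIV_add differentiable_upto_DERIV)
  have "differentiable_upto n (\<lambda>x. deriv f x + deriv g x)"
    using Suc by (simp add: differentiable_upto_Suc)
  then show ?case by (simp add: differentiable_upto_Suc_iff[OF D])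
qed

lemma differentiable_upto_cmult: "differentiable_upto n f \<Longrightarrow> differentiable_upto n (\<lambda>x. c * f x)"
proof (induction n arbitrary: f)
  case 0
  then show ?case by (simp add: differentiable_upto_0)
next
  case (Suc n)
  have D: "DERIV (\<lambda>x. c * f x) x :> c * deriv f x" for x
    using Suc.prems by (intro DERIV_cmult differentiable_upto_DERIV)
  have "differentiable_upto n (\<lambda>x. c * deriv f x)"
    using Suc by (simp add: differentiable_upto_Suc)
  then show ?case by (simp add: differentiable_upto_Suc_iff[OF D])
qed

lemma differentiable_upto_mult:
  "differentiable_upto n f \<Longrightarrow> differentiable_upto n g \<Longrightarrow> differentiable_upto n (\<lambda>x. f x * g x)"
proof (induction n arbitrary: f g)
  case 0
  then show ?case by (simp add: differentiable_upto_0)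
next
  case (Suc n)
  have D: "DERIV (\<lambda>x. f x * g x) x :> deriv f x * g x + deriv g x * f x" for x
    using Suc.prems by (intro DERIV_mult differentiable_upto_DERIV)
  have "differentiable_upto n (\<lambda>x. deriv f x * g x + deriv g x * f x)"
    using Suc differentiable_upto_mono[of n "Suc n"]
    by (intro differentiable_upto_add) (simp_all add: differentiable_upto_Suc)
  then show ?case by (simp add: differentiable_upto_Suc_iff[OF D])
qed

lemma differentiable_upto_compose_affine:
  "differentiable_upto n f \<Longrightarrow> differentiable_upto n (\<lambda>x. f (m * x + c))"
proof (induction n arbitrary: f)
  case 0
  have "DERIV (\<lambda>x. f (m * x + c)) x :> deriv f (m * x + c) * m" for x
    using 0 by (intro DERIV_chain2[OF differentiable_upto_DERIV]) (auto intro!: derivative_eq_intros)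
  then show ?case unfolding differentiable_upto_0 real_differentiable_def by blast
next
  case (Suc n)
  have "DERIV (\<lambda>x. f (m * x + c)) x :> deriv f (m * x + c) * m" for x
    using Suc.prems by (intro DERIV_chain2[OF differentiable_upto_DERIV]) (auto intro!: derivative_eq_intros)
  then have D: "DERIV (\<lambda>x. f (m * x + c)) x :> m * deriv f (m * x + c)" for x
    by (simp only: mult.commute[of _ m])
  have "differentiable_upto n (\<lambda>x. m * deriv f (m * x + c))"
    using Suc by (intro differentiable_upto_cmult) (simp add: differentiable_upto_Suc)
  then show ?case by (simp add: differentiable_upto_Suc_iff[OF D])
qed

lemma smooth_add: "smooth f \<Longrightarrow> smooth g \<Longrightarrow> smooth (\<lambda>x. f x + g x)"
  by (simp add: smooth_iff_differentiable_upto differentiable_upto_add)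

lemma smooth_cmult: "smooth f \<Longrightarrow> smooth (\<lambda>x. c * f x)"
  by (simp add: smooth_iff_differentiable_upto differentiable_upto_cmult)

lemma smooth_diff: "smooth f \<Longrightarrow> smooth g \<Longrightarrow> smooth (\<lambda>x. f x - g x)"
  using smooth_add[of f "\<lambda>x. (-1) * g x"] smooth_cmult[of g "-1"] by simp

lemma smooth_mult: "smooth f \<Longrightarrow> smooth g \<Longrightarrow> smooth (\<lambda>x. f x * g x)"
  by (simp add: smooth_iff_differentiable_upto differentiable_upto_mult)

lemma smooth_compose_affine: "smooth f \<Longrightarrow> smooth (\<lambda>x. f (m * x + c))"
  by (simp add: smooth_iff_differentiable_upto differentiable_upto_compose_affine)

lemma smoothI_DERIV:
  assumes "\<And>x. DERIV f x :> f' x" and "smooth f'"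
  shows "smooth f"
  unfolding smooth_iff_differentiable_upto
proof
  fix n show "differentiable_upto n f"
  proof (cases n)
    case 0
    then show ?thesis using assms(1) by (auto simp: differentiable_upto_0 real_differentiable_def)
  next
    case (Suc m)
    then show ?thesis
      using assms(2) by (simp add: differentiable_upto_Suc_iff[OF assms(1)] smooth_iff_differentiable_upto)
  qed
qed

lemma smooth_imp_DERIV: "smooth f \<Longrightarrow> DERIV f x :> deriv f x"
  by (auto simp: smooth_iff_differentiable_upto intro: differentiable_upto_DERIV)

lemma smooth_imp_continuous_on: "smooth f \<Longrightarrow> continuous_on S f"
  by (meson DERIV_isCont continuous_at_imp_continuous_on smooth_imp_DERIV)

section \<open>A smooth bump and smooth ramps\<close>

definition flat_poly_exp :: "real poly \<Rightarrow> real \<Rightarrow> real" where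
  "flat_poly_exp p y = (if 0 < y then poly p (1 / y) * exp (- (1 / y)) else 0)"

text \<open>\<open>(p(1/y) exp(-1/y))' = (p - p')(1/y) exp(-1/y) / y\<^sup>2\<close> for \<open>y > 0\<close>.\<close>

definition flat_deriv_poly :: "real poly \<Rightarrow> real poly" where
  "flat_deriv_poly p = [:0, 0, 1:] * (p - pderiv p)"

lemma tendsto_poly_times_exp_neg_at_top: "((\<lambda>t::real. poly p t * exp (- t)) \<longlongrightarrow> 0) at_top"
proof -
  have "poly p t * exp (- t) = (\<Sum>i\<le>degree p. coeff p i * (t ^ i / exp t))" for t
    by (simp add: poly_altdef exp_minus divide_inverse sum_distrib_right mult.assoc)
  moreover have "((\<lambda>t. \<Sum>i\<le>degree p. coeff p i * (t ^ i / exp t)) \<longlongrightarrow> (\<Sum>i\<le>degree p. coeff p i * 0)) at_top"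
    by (intro tendsto_sum tendsto_mult tendsto_const tendsto_power_div_exp_0)
  ultimately show ?thesis by simp
qed

lemma DERIV_flat_poly_exp: "DERIV (flat_poly_exp p) y :> flat_poly_exp (flat_deriv_poly p) y"
proof -
  consider (greater) "y > 0" | (less) "y < 0" | (equal) "y = 0" by linarith
  then show ?thesis
  proof cases
    case greater
    have "DERIV (\<lambda>y. poly p (1 / y) * exp (- (1 / y))) y :>
        poly (pderiv p) (1 / y) * (- (1 / y\<^sup>2)) * exp (- (1 / y)) + poly p (1 / y) * (exp (- (1 / y)) * (1 / y\<^sup>2))"
      using greater
      by (auto intro!: derivative_eq_intros DERIV_chain2[OF poly_DERIV] simp: power2_eq_square field_simps)
    moreover have "poly (pderiv p) (1 / y) * (- (1 / y\<^sup>2)) * exp (- (1 / y)) + poly p (1 / y) * (exp (- (1 / y)) * (1 / y\<^sup>2))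
        = flat_poly_exp (flat_deriv_poly p) y"
      using greater by (simp add: flat_poly_exp_def flat_deriv_poly_def algebra_simps power2_eq_square)
    ultimately have "DERIV (\<lambda>y. poly p (1 / y) * exp (- (1 / y))) y :> flat_poly_exp (flat_deriv_poly p) y"
      by simp
    then show ?thesis
      by (rule has_field_derivative_transform_within_open[where S = "{0<..}"])
        (use greater in \<open>auto simp: flat_poly_exp_def\<close>)
  next
    case less
    have "DERIV (\<lambda>y. 0) y :> flat_poly_exp (flat_deriv_poly p) y"
      using less by (simp add: flat_poly_exp_def)
    then show ?thesis
      by (rule has_field_derivative_transform_within_open[where S = "{..<0}"])
        (use less in \<open>auto simp: flat_poly_exp_def\<close>)
  next
    case equal
    have left: "((\<lambda>z. (flat_poly_exp p z - flat_poly_exp p 0) / (z - 0)) \<longlongrightarrow> 0) (at_left 0)"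
      by (rule tendsto_eventually, rule eventually_at_leftI[of "-1"]) (auto simp: flat_poly_exp_def)
    have "((\<lambda>z. poly (pCons 0 p) (inverse z) * exp (- inverse z)) \<longlongrightarrow> 0) (at_right 0)"
      by (rule filterlim_compose[OF tendsto_poly_times_exp_neg_at_top filterlim_inverse_at_top_right])
    then have right: "((\<lambda>z. (flat_poly_exp p z - flat_poly_exp p 0) / (z - 0)) \<longlongrightarrow> 0) (at_right 0)"
      by (rule Lim_transform_eventually, intro eventually_at_rightI[of _ 1])
        (auto simp: flat_poly_exp_def field_simps)
    show ?thesis
      using filterlim_split_at[OF left right] equal
      by (simp add: has_field_derivative_iff flat_poly_exp_def)
  qed
qed

lemma smooth_flat_poly_exp: "smooth (flat_poly_exp p)"
proof -
  have "\<forall>p. differentiable_upto n (flat_poly_exp p)" for n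
  proof (induction n)
    case 0
    then show ?case using DERIV_flat_poly_exp by (auto simp: differentiable_upto_0 real_differentiable_def)
  next
    case (Suc n)
    then show ?case by (simp add: differentiable_upto_Suc_iff[OF DERIV_flat_poly_exp])
  qed
  then show ?thesis by (simp add: smooth_iff_differentiable_upto)
qed

lemma integral_vanishing_below:
  fixes p :: "real \<Rightarrow> real"
  assumes "\<And>y. y \<le> 0 \<Longrightarrow> p y = 0" and "z \<le> 0"
  shows "integral {-1..z} p = 0"
  using assms(2) by (intro integral_unique has_integral_is_0 assms(1)) auto

lemma DERIV_integral_vanishing_below:
  fixes p :: "real \<Rightarrow> real"
  assumes cont: "continuous_on UNIV p" and vanish: "\<And>y. y \<le> 0 \<Longrightarrow> p y = 0"
  shows "DERIV (\<lambda>z. integral {-1..z} p) x :> p x"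
proof (cases "x < 0")
  case True
  have "p x = 0" using True by (intro vanish) simp
  then have "DERIV (\<lambda>_. 0) x :> p x" by simp
  then show ?thesis
  proof (rule has_field_derivative_transform_within_open[where S = "{..<0}"])
    fix y :: real
    assume "y \<in> {..<0}"
    then show "0 = integral {-1..y} p" by (simp add: integral_vanishing_below[OF vanish])
  qed (use True in simp_all)
next
  case False
  have "((\<lambda>z. integral {-1..z} p) has_real_derivative p x) (at x within {-1..x+1})"
    using False by (intro integral_has_real_derivative continuous_on_subset[OF cont]) auto
  moreover have "x \<in> interior {-1..x+1}" using False by simp
  ultimately show ?thesis by (metis at_within_interior)
qed

lemma DERIV_bounds_imp_increment_bounds:
  fixes f f' :: "real \<Rightarrow> real"
  assumes "z \<le> y" and "\<And>x. DERIV f x :> f' x"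
    and "\<And>x. z \<le> x \<Longrightarrow> x \<le> y \<Longrightarrow> lo \<le> f' x \<and> f' x \<le> hi"
  shows "lo * (y - z) \<le> f y - f z \<and> f y - f z \<le> hi * (y - z)"
proof (cases "z = y")
  case False
  then have "z < y" using assms(1) by simp
  from MVT2[OF this assms(2)] obtain \<xi> where "z < \<xi>" "\<xi> < y" "f y - f z = (y - z) * f' \<xi>"
    by blast
  with assms(3)[of \<xi>] \<open>z < y\<close> show ?thesis by (simp add: mult.commute mult_left_mono)
qed simp

definition bump :: "real \<Rightarrow> real" where
  "bump t = flat_poly_exp 1 t * flat_poly_exp 1 (1 - t)"

lemma smooth_bump: "smooth bump"
  using smooth_mult[OF smooth_flat_poly_exp smooth_compose_affine[OF smooth_flat_poly_exp, of 1 "-1" 1]]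
  by (simp add: bump_def[abs_def])

lemma bump_eq_0: "t \<le> 0 \<or> 1 \<le> t \<Longrightarrow> bump t = 0"
  by (auto simp: bump_def flat_poly_exp_def)

lemma bump_pos: "0 < t \<Longrightarrow> t < 1 \<Longrightarrow> 0 < bump t"
  by (simp add: bump_def flat_poly_exp_def)

lemma bump_nonneg: "0 \<le> bump t"
  using bump_eq_0[of t] bump_pos[of t] by fastforce

definition smooth_step :: "real \<Rightarrow> real" where
  "smooth_step y = integral {-1..y} bump / integral {-1..1} bump"

lemma DERIV_integral_bump: "DERIV (\<lambda>z. integral {-1..z} bump) x :> bump x"
  by (intro DERIV_integral_vanishing_below smooth_imp_continuous_on smooth_bump) (simp add: bump_eq_0)

lemma integral_bump_eq_0: "y \<le> 0 \<Longrightarrow> integral {-1..y} bump = 0"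
  by (intro integral_vanishing_below) (simp_all add: bump_eq_0)

lemma integral_bump_pos: "0 < integral {-1..1} bump"
proof -
  obtain \<xi> where "0 < \<xi>" "\<xi> < 1" "integral {-1..1} bump - integral {-1..0} bump = (1 - 0) * bump \<xi>"
    using MVT2[of 0 1 _ bump, OF _ DERIV_integral_bump] by auto
  then show ?thesis using bump_pos integral_bump_eq_0[of 0] by auto
qed

lemma DERIV_smooth_step: "DERIV smooth_step x :> bump x / integral {-1..1} bump"
  unfolding smooth_step_def[abs_def] by (intro DERIV_cdivide DERIV_integral_bump)

lemma smooth_smooth_step: "smooth smooth_step"
  using smooth_cmult[OF smooth_bump, of "inverse (integral {-1..1} bump)"]
  by (intro smoothI_DERIV[OF DERIV_smooth_step]) (simp add: divide_inverse mult.commute)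

lemma smooth_step_eq_0: "y \<le> 0 \<Longrightarrow> smooth_step y = 0"
  by (simp add: smooth_step_def integral_bump_eq_0)

lemma smooth_step_eq_1: "1 \<le> y \<Longrightarrow> smooth_step y = 1"
  using DERIV_bounds_imp_increment_bounds[of 1 y _ bump 0 0, OF _ DERIV_integral_bump]
    integral_bump_pos
  by (simp add: smooth_step_def bump_eq_0)

lemma integral_bump_mono: "z \<le> y \<Longrightarrow> integral {-1..z} bump \<le> integral {-1..y} bump"
  by (rule DERIV_nonneg_imp_nondecreasing[where f = "\<lambda>z. integral {-1..z} bump"])
    (use DERIV_integral_bump bump_nonneg in blast)+

lemma smooth_step_bounds: "0 \<le> smooth_step y" "smooth_step y \<le> 1"
proof -
  have "0 \<le> integral {-1..y} bump"
    using integral_bump_mono[of "min 0 y" y] integral_bump_eq_0[of "min 0 y"] by simp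
  moreover have "integral {-1..y} bump \<le> integral {-1..1} bump"
    using integral_bump_mono[of y "max 1 y"] smooth_step_eq_1[of "max 1 y"] integral_bump_pos
    by (simp add: smooth_step_def)
  ultimately show "0 \<le> smooth_step y" "smooth_step y \<le> 1"
    using integral_bump_pos by (simp_all add: smooth_step_def)
qed

definition smooth_ramp :: "real \<Rightarrow> real" where
  "smooth_ramp y = integral {-1..y} smooth_step"

lemma DERIV_smooth_ramp: "DERIV smooth_ramp x :> smooth_step x"
  unfolding smooth_ramp_def[abs_def]
  by (intro DERIV_integral_vanishing_below smooth_imp_continuous_on smooth_smooth_step)
    (simp add: smooth_step_eq_0)

lemma smooth_smooth_ramp: "smooth smooth_ramp"
  by (rule smoothI_DERIV[OF DERIV_smooth_ramp smooth_smooth_step])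

lemma smooth_ramp_eq_0: "y \<le> 0 \<Longrightarrow> smooth_ramp y = 0"
  unfolding smooth_ramp_def by (intro integral_vanishing_below) (simp_all add: smooth_step_eq_0)

lemma smooth_ramp_increment_bounds:
  "z \<le> y \<Longrightarrow> 0 \<le> smooth_ramp y - smooth_ramp z \<and> smooth_ramp y - smooth_ramp z \<le> y - z"
  using DERIV_bounds_imp_increment_bounds[of z y, OF _ DERIV_smooth_ramp, of 0 1]
  by (simp add: smooth_step_bounds)

lemma smooth_ramp_linear: "1 \<le> z \<Longrightarrow> z \<le> y \<Longrightarrow> smooth_ramp y - smooth_ramp z = y - z"
  using DERIV_bounds_imp_increment_bounds[of z y, OF _ DERIV_smooth_ramp, of 1 1]
  by (simp add: smooth_step_eq_1)

section \<open>Essential boundedness of \<open>H\<^sup>1\<close> functions\<close>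

text \<open>As \<open>N \<rightarrow> \<infinity>\<close> this tends to the piecewise linear ramp rising from \<open>0\<close> at \<open>x = 0\<close> to \<open>1\<close> at \<open>x = h\<close>.\<close>

definition mollified_ramp :: "real \<Rightarrow> real \<Rightarrow> real \<Rightarrow> real" where
  "mollified_ramp N h x = (smooth_ramp (N * x) - smooth_ramp (N * (x - h))) / (N * h)"

definition mollified_ramp_deriv :: "real \<Rightarrow> real \<Rightarrow> real \<Rightarrow> real" where
  "mollified_ramp_deriv N h x = (smooth_step (N * x) - smooth_step (N * (x - h))) / h"

lemma DERIV_mollified_ramp:
  assumes "N \<noteq> 0"
  shows "DERIV (\<lambda>x. mollified_ramp N h (x - c)) x :> mollified_ramp_deriv N h (x - c)"
proof -
  have "DERIV (\<lambda>x. mollified_ramp N h (x - c)) x :>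
      (smooth_step (N * (x - c)) * N - smooth_step (N * (x - c - h)) * N) / (N * h)"
    unfolding mollified_ramp_def
    by (intro DERIV_cdivide DERIV_diff DERIV_chain2[OF DERIV_smooth_ramp])
      (auto intro!: derivative_eq_intros)
  then show ?thesis
    using assms by (simp add: mollified_ramp_deriv_def left_diff_distrib[symmetric])
qed

lemma smooth_mollified_ramp: "smooth (\<lambda>x. mollified_ramp N h (x - c))"
proof -
  have "mollified_ramp N h (x - c) = inverse (N * h) *
      (smooth_ramp (N * x + - (N * c)) - smooth_ramp (N * x + - (N * c + N * h)))" for x
    by (simp add: mollified_ramp_def divide_inverse algebra_simps)
  then show ?thesis
    by (simp only:) (intro smooth_cmult smooth_diff smooth_compose_affine smooth_smooth_ramp)
qed

lemma mollified_ramp_bounds: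
  assumes "0 < N" "0 < h"
  shows "0 \<le> mollified_ramp N h x" "mollified_ramp N h x \<le> 1"
  using smooth_ramp_increment_bounds[of "N * (x - h)" "N * x"] assms
  by (simp_all add: mollified_ramp_def right_diff_distrib)

lemma mollified_ramp_eq_0: "x \<le> 0 \<Longrightarrow> 0 < N \<Longrightarrow> 0 < h \<Longrightarrow> mollified_ramp N h x = 0"
  by (simp add: mollified_ramp_def smooth_ramp_eq_0 mult_nonneg_nonpos)

lemma mollified_ramp_eq_1:
  assumes "h + 1 / N \<le> x" "0 < N" "0 < h"
  shows "mollified_ramp N h x = 1"
proof -
  have "1 \<le> N * (x - h)" using assms by (simp add: field_simps)
  then show ?thesis
    using smooth_ramp_linear[of "N * (x - h)" "N * x"] assms
    by (simp add: mollified_ramp_def right_diff_distrib)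
qed

lemma abs_mollified_ramp_deriv_le: "0 < h \<Longrightarrow> \<bar>mollified_ramp_deriv N h x\<bar> \<le> 1 / h"
  using smooth_step_bounds[of "N * x"] smooth_step_bounds[of "N * (x - h)"]
  by (simp add: mollified_ramp_deriv_def divide_right_mono abs_le_iff)

lemma mollified_ramp_deriv_eq_0:
  assumes "x \<le> 0 \<or> h + 1 / N \<le> x" "0 < N" "0 < h"
  shows "mollified_ramp_deriv N h x = 0"
  using assms(1)
proof
  assume "x \<le> 0"
  then show ?thesis
    using assms by (simp add: mollified_ramp_deriv_def smooth_step_eq_0 mult_nonneg_nonpos)
next
  assume "h + 1 / N \<le> x"
  then have "1 \<le> N * (x - h)" "N * (x - h) \<le> N * x" using assms by (simp_all add: field_simps)
  then show ?thesis by (simp add: mollified_ramp_deriv_def smooth_step_eq_1)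
qed

lemma tendsto_smooth_step_scaled:
  "(\<lambda>n. smooth_step (real (Suc n) * y)) \<longlonglongrightarrow> (if 0 < y then 1 else 0)"
proof (cases "0 < y")
  case True
  have "eventually (\<lambda>n. smooth_step (real (Suc n) * y) = 1) sequentially"
  proof (rule eventually_sequentiallyI[of "nat \<lceil>1 / y\<rceil>"])
    fix n assume "nat \<lceil>1 / y\<rceil> \<le> n"
    then have "1 / y \<le> real (Suc n)" by linarith
    then show "smooth_step (real (Suc n) * y) = 1"
      using True by (intro smooth_step_eq_1) (simp add: field_simps)
  qed
  then show ?thesis using True by (simp add: tendsto_eventually)
next
  case False
  then show ?thesis by (simp add: smooth_step_eq_0 mult_nonneg_nonpos)
qed

lemma tendsto_mollified_ramp_deriv:
  assumes "0 < h" "x \<noteq> 0"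
  shows "(\<lambda>n. mollified_ramp_deriv (real (Suc n)) h x) \<longlonglongrightarrow> indicator {0..h} x / h"
proof -
  have "(\<lambda>n. mollified_ramp_deriv (real (Suc n)) h x) \<longlonglongrightarrow>
      ((if 0 < x then 1 else 0) - (if 0 < x - h then 1 else 0)) / h"
    unfolding mollified_ramp_deriv_def
    by (intro tendsto_intros tendsto_smooth_step_scaled) (use assms in simp)
  also have "((if 0 < x then 1 else 0) - (if 0 < x - h then 1 else 0)) / h = indicator {0..h} x / h"
    using assms by (auto simp: indicator_def)
  finally show ?thesis .
qed

lemma borel_measurable_mollified_ramp_deriv [measurable]:
  "mollified_ramp_deriv N h \<in> borel_measurable borel"
proof -
  have "continuous_on UNIV smooth_step" by (rule smooth_imp_continuous_on[OF smooth_smooth_step])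
  then have "smooth_step \<in> borel_measurable borel" by (rule borel_measurable_continuous_onI)
  then show ?thesis unfolding mollified_ramp_deriv_def[abs_def] by measurable
qed

lemma L2_integrable_indicator_abs:
  assumes "L2 f"
  shows "integrable lborel (\<lambda>x. indicator {c..d} x * \<bar>f x\<bar>)"
proof (rule Bochner_Integration.integrable_bound)
  have "emeasure lborel {c..d} < \<infinity>"
    by (cases "c \<le> d") (simp_all add: emeasure_lborel_Icc)
  then have "integrable lborel (indicator {c..d} :: real \<Rightarrow> real)"
    by (intro integrable_real_indicator) simp_all
  then show "integrable lborel (\<lambda>x. (f x)\<^sup>2 + indicator {c..d} x)"
    using assms by (intro Bochner_Integration.integrable_add) (auto simp: L2_def)
  show "(\<lambda>x. indicator {c..d} x * \<bar>f x\<bar>) \<in> borel_measurable lborel"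
    using assms by (auto simp: L2_def)
  have "\<bar>f x\<bar> \<le> (f x)\<^sup>2 + 1" for x
  proof -
    have "0 \<le> (\<bar>f x\<bar> - 1)\<^sup>2" by simp
    then show ?thesis unfolding power2_diff power2_abs by simp
  qed
  then show "AE x in lborel. norm (indicator {c..d} x * \<bar>f x\<bar>) \<le> norm ((f x)\<^sup>2 + indicator {c..d} x)"
    by (intro AE_I2) (simp add: indicator_def)
qed

lemma L2_set_integrable: "L2 f \<Longrightarrow> set_integrable lborel {c..d} f"
  unfolding set_integrable_def
  by (rule Bochner_Integration.integrable_bound[OF L2_integrable_indicator_abs])
    (auto simp: L2_def abs_mult)

definition interval_avg :: "(real \<Rightarrow> real) \<Rightarrow> real \<Rightarrow> real \<Rightarrow> real" where
  "interval_avg u a h = (LINT x|lborel. indicator {a..a+h} x * u x) / h"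

lemma tendsto_integral_mollified_ramp_deriv:
  assumes "L2 u" "0 < h" "h \<le> 1"
  shows "\<And>n. integrable lborel (\<lambda>x. u x * mollified_ramp_deriv (real (Suc n)) h (x - a))"
    and "(\<lambda>n. LINT x|lborel. u x * mollified_ramp_deriv (real (Suc n)) h (x - a))
           \<longlonglongrightarrow> interval_avg u a h"
proof -
  have [measurable]: "u \<in> borel_measurable lborel" using assms(1) by (simp add: L2_def)
  define w where "w x = indicator {a..a+2} x * \<bar>u x\<bar> / h" for x
  have w: "integrable lborel w"
    unfolding w_def by (intro integrable_divide L2_integrable_indicator_abs assms(1))
  have avg_meas: "(\<lambda>x. indicator {a..a+h} x * u x / h) \<in> borel_measurable lborel"
    by measurable
  have meas: "(\<lambda>x. u x * mollified_ramp_deriv (real (Suc n)) h (x - a)) \<in> borel_measurable lborel"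
    for n by measurable
  have lim: "AE x in lborel.
      (\<lambda>n. u x * mollified_ramp_deriv (real (Suc n)) h (x - a)) \<longlonglongrightarrow> indicator {a..a+h} x * u x / h"
    using AE_lborel_singleton[of a]
  proof eventually_elim
    case (elim x)
    have "indicator {0..h} (x - a) = (indicator {a..a+h} x :: real)"
      by (auto simp: indicator_def)
    then show ?case
      using tendsto_mult_left[OF tendsto_mollified_ramp_deriv[OF assms(2), of "x - a"], of "u x"] elim
      by (simp add: mult.commute)
  qed
  have bound: "AE x in lborel. norm (u x * mollified_ramp_deriv (real (Suc n)) h (x - a)) \<le> w x"
    for n
  proof (intro AE_I2)
    fix x
    show "norm (u x * mollified_ramp_deriv (real (Suc n)) h (x - a)) \<le> w x"
    proof (cases "x \<in> {a..a+2}")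
      case True
      then show ?thesis
        using mult_left_mono[OF abs_mollified_ramp_deriv_le[OF assms(2)], of "\<bar>u x\<bar>"]
        by (simp add: w_def abs_mult)
    next
      case False
      have "1 / real (Suc n) \<le> 1" by simp
      then have "h + 1 / real (Suc n) \<le> 2" using assms(3) by linarith
      then have "x - a \<le> 0 \<or> h + 1 / real (Suc n) \<le> x - a"
        using False by auto
      then show ?thesis
        using False assms(2) by (simp add: w_def mollified_ramp_deriv_eq_0)
    qed
  qed
  show "\<And>n. integrable lborel (\<lambda>x. u x * mollified_ramp_deriv (real (Suc n)) h (x - a))"
    by (rule integrable_dominated_convergence2[OF avg_meas meas w lim bound])
  show "(\<lambda>n. LINT x|lborel. u x * mollified_ramp_deriv (real (Suc n)) h (x - a))
      \<longlonglongrightarrow> interval_avg u a h"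
    using integral_dominated_convergence[OF avg_meas meas w lim bound] by (simp add: interval_avg_def)
qed

text \<open>The test function is the difference of the ramps starting at \<open>a\<close> and at \<open>b\<close>: it is bounded by
  \<open>1\<close> and vanishes outside \<open>[a, b+2]\<close>, while its derivative averages \<open>u\<close> near \<open>a\<close> and near \<open>b\<close>.\<close>

lemma weak_deriv_mollified_ramp_diff_le:
  assumes "H1 u g" "a \<le> b" "0 < h" "h \<le> 1"
  shows "\<bar>(LINT x|lborel. u x * mollified_ramp_deriv (real (Suc n)) h (x - a))
          - (LINT x|lborel. u x * mollified_ramp_deriv (real (Suc n)) h (x - b))\<bar>
         \<le> (LINT x|lborel. indicator {a..b+2} x * \<bar>g x\<bar>)"
proof -
  let ?N = "real (Suc n)"
  define \<phi> where "\<phi> x = mollified_ramp ?N h (x - a) - mollified_ramp ?N h (x - b)" for x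
  have L2: "L2 u" "L2 g" and weak: "weak_deriv u g" using assms(1) by (simp_all add: H1_def)
  have "DERIV \<phi> x :> mollified_ramp_deriv ?N h (x - a) - mollified_ramp_deriv ?N h (x - b)" for x
    unfolding \<phi>_def by (intro DERIV_diff DERIV_mollified_ramp) simp_all
  then have deriv_\<phi>: "deriv \<phi> x = mollified_ramp_deriv ?N h (x - a) - mollified_ramp_deriv ?N h (x - b)" for x
    by (rule DERIV_imp_deriv)
  have smooth_\<phi>: "smooth \<phi>"
    unfolding \<phi>_def by (intro smooth_diff smooth_mollified_ramp)
  have \<phi>_le: "\<bar>\<phi> x\<bar> \<le> 1" for x
    using mollified_ramp_bounds[of ?N h "x - a"] mollified_ramp_bounds[of ?N h "x - b"] assms(3)
    by (simp add: \<phi>_def)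
  have \<phi>_eq_0: "\<phi> x = 0" if "x \<notin> {a..b+2}" for x
  proof (cases "x < a")
    case True
    then show ?thesis using assms(2,3) by (simp add: \<phi>_def mollified_ramp_eq_0)
  next
    case False
    have "1 / ?N \<le> 1" by simp
    moreover have "b + 2 < x" using False that by auto
    ultimately have "h + 1 / ?N \<le> x - b" "h + 1 / ?N \<le> x - a"
      using assms(2,4) by linarith+
    then show ?thesis using assms(3) by (simp add: \<phi>_def mollified_ramp_eq_1)
  qed
  have "test_fun \<phi>"
    unfolding test_fun_def
  proof
    show "\<forall>n x. (deriv ^^ n) \<phi> differentiable (at x)" using smooth_\<phi> by (simp add: smooth_def)
    show "\<exists>R. \<forall>x. R < \<bar>x\<bar> \<longrightarrow> \<phi> x = 0"
    proof (intro exI allI impI)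
      fix x assume "\<bar>a\<bar> + \<bar>b\<bar> + 2 < \<bar>x\<bar>"
      then show "\<phi> x = 0" by (intro \<phi>_eq_0) auto
    qed
  qed
  with weak have "(LINT x|lborel. u x * deriv \<phi> x) = - (LINT x|lborel. g x * \<phi> x)"
    by (simp add: weak_deriv_def)
  moreover have "(LINT x|lborel. u x * deriv \<phi> x)
      = (LINT x|lborel. u x * mollified_ramp_deriv ?N h (x - a))
        - (LINT x|lborel. u x * mollified_ramp_deriv ?N h (x - b))"
    unfolding deriv_\<phi> right_diff_distrib
    by (intro Bochner_Integration.integral_diff tendsto_integral_mollified_ramp_deriv(1) L2 assms(3,4))
  moreover have "\<bar>LINT x|lborel. g x * \<phi> x\<bar> \<le> (LINT x|lborel. indicator {a..b+2} x * \<bar>g x\<bar>)"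
  proof (rule integral_abs_bound_integral)
    have g_bound: "\<bar>g x * \<phi> x\<bar> \<le> indicator {a..b+2} x * \<bar>g x\<bar>" for x
      using \<phi>_eq_0[of x] mult_left_mono[OF \<phi>_le[of x], of "\<bar>g x\<bar>"]
      by (cases "x \<in> {a..b+2}") (simp_all add: abs_mult)
    have "\<phi> \<in> borel_measurable lborel"
      using smooth_imp_continuous_on[OF smooth_\<phi>] by (simp add: borel_measurable_continuous_onI)
    then show "integrable lborel (\<lambda>x. g x * \<phi> x)"
      using L2(2) g_bound
      by (intro Bochner_Integration.integrable_bound[OF L2_integrable_indicator_abs[OF L2(2)]])
        (auto simp: L2_def)
    show "integrable lborel (\<lambda>x. indicator {a..b+2} x * \<bar>g x\<bar>)"
      by (rule L2_integrable_indicator_abs[OF L2(2)])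
    show "\<And>x. x \<in> space lborel \<Longrightarrow> \<bar>g x * \<phi> x\<bar> \<le> indicator {a..b+2} x * \<bar>g x\<bar>"
      by (rule g_bound)
  qed
  ultimately show ?thesis by simp
qed

lemma weak_deriv_interval_avg_diff_le:
  assumes "H1 u g" "a \<le> b" "0 < h" "h \<le> 1"
  shows "\<bar>interval_avg u a h - interval_avg u b h\<bar> \<le> (LINT x|lborel. indicator {a..b+2} x * \<bar>g x\<bar>)"
proof (rule LIMSEQ_le_const2)
  have "L2 u" using assms(1) by (simp add: H1_def)
  then show "(\<lambda>n. \<bar>(LINT x|lborel. u x * mollified_ramp_deriv (real (Suc n)) h (x - a))
      - (LINT x|lborel. u x * mollified_ramp_deriv (real (Suc n)) h (x - b))\<bar>)
      \<longlonglongrightarrow> \<bar>interval_avg u a h - interval_avg u b h\<bar>"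
    by (intro tendsto_intros tendsto_integral_mollified_ramp_deriv(2) assms(3,4))
qed (use weak_deriv_mollified_ramp_diff_le[OF assms] in blast)

lemma interval_avg_tendsto_AE:
  assumes "L2 u"
  obtains N where "negligible N" "\<And>x. x \<notin> N \<Longrightarrow> ((\<lambda>h. interval_avg u x h) \<longlongrightarrow> u x) (at_right 0)"
proof -
  have avg_eq: "interval_avg u x h = integral {x..x+h} u / h" for x h
    using set_borel_integral_eq_integral(2)[OF L2_set_integrable[OF assms]]
    by (simp add: interval_avg_def set_lebesgue_integral_def)
  have "u integrable_on cbox c d" for c d :: real
    using set_borel_integral_eq_integral(1)[OF L2_set_integrable[OF assms]] by simp
  then obtain N where "negligible N" and N: "\<And>x e. x \<notin> N \<Longrightarrow> 0 < e \<Longrightarrow> \<exists>d>0. \<forall>h. 0 < h \<and> h < d \<longrightarrow>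
      norm (integral (cbox x (x + h *\<^sub>R One)) u /\<^sub>R h ^ DIM(real) - u x) < e"
    using integrable_ccontinuous_explicit by blast
  moreover have "((\<lambda>h. interval_avg u x h) \<longlongrightarrow> u x) (at_right 0)" if "x \<notin> N" for x
    unfolding tendsto_iff eventually_at_right_field
  proof (intro allI impI)
    fix e :: real assume "0 < e"
    with N[OF that] obtain d where "0 < d"
      "\<forall>h. 0 < h \<and> h < d \<longrightarrow> norm (integral (cbox x (x + h *\<^sub>R One)) u /\<^sub>R h ^ DIM(real) - u x) < e"
      by blast
    then show "\<exists>b>0. \<forall>h>0. h < b \<longrightarrow> dist (interval_avg u x h) (u x) < e"
      by (auto simp: avg_eq dist_real_def cbox_interval divide_inverse mult.commute)
  qed
  ultimately show ?thesis using that by blast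
qed

lemma weak_deriv_increment_le:
  assumes "H1 u g"
  obtains N where "negligible N"
    "\<And>a b. a \<notin> N \<Longrightarrow> b \<notin> N \<Longrightarrow> a \<le> b \<Longrightarrow>
       \<bar>u a - u b\<bar> \<le> (LINT x|lborel. indicator {a..b+2} x * \<bar>g x\<bar>)"
proof -
  obtain N where "negligible N"
    and N: "\<And>x. x \<notin> N \<Longrightarrow> ((\<lambda>h. interval_avg u x h) \<longlongrightarrow> u x) (at_right 0)"
    using interval_avg_tendsto_AE assms by (auto simp: H1_def)
  moreover have "\<bar>u a - u b\<bar> \<le> (LINT x|lborel. indicator {a..b+2} x * \<bar>g x\<bar>)"
    if "a \<notin> N" "b \<notin> N" "a \<le> b" for a b
  proof (rule tendsto_upperbound)
    show "((\<lambda>h. \<bar>interval_avg u a h - interval_avg u b h\<bar>) \<longlongrightarrow> \<bar>u a - u b\<bar>) (at_right 0)"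
      using that by (intro tendsto_intros N)
    show "\<forall>\<^sub>F h in at_right 0. \<bar>interval_avg u a h - interval_avg u b h\<bar>
        \<le> (LINT x|lborel. indicator {a..b+2} x * \<bar>g x\<bar>)"
      using eventually_at_right_real[OF zero_less_one]
      by eventually_elim (use weak_deriv_interval_avg_diff_le[OF assms \<open>a \<le> b\<close>] in auto)
  qed simp
  ultimately show ?thesis using that by blast
qed

lemma integral_indicator_abs_le:
  assumes "L2 f" "(LINT x|lborel. (f x)\<^sup>2) \<le> A" "0 < t" "c \<le> d"
  shows "(LINT x|lborel. indicator {c..d} x * \<bar>f x\<bar>) \<le> A / (2 * t) + t * (d - c) / 2"
proof -
  have ind: "integrable lborel (indicator {c..d} :: real \<Rightarrow> real)"
    using assms(4) by (intro integrable_real_indicator) (simp_all add: emeasure_lborel_Icc)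
  have sq: "integrable lborel (\<lambda>x. (f x)\<^sup>2)" using assms(1) by (simp add: L2_def)
  have "\<bar>f x\<bar> \<le> (f x)\<^sup>2 / (2 * t) + t / 2" for x
  proof -
    have "0 \<le> (\<bar>f x\<bar> - t)\<^sup>2" by simp
    then have "2 * t * \<bar>f x\<bar> \<le> (f x)\<^sup>2 + t\<^sup>2" by (simp add: power2_diff power2_abs mult_ac)
    then show ?thesis using assms(3) by (simp add: field_simps power2_eq_square)
  qed
  moreover have "integrable lborel (\<lambda>x. (f x)\<^sup>2 / (2 * t) + t / 2 * indicator {c..d} x)"
    using ind sq by simp
  ultimately have "(LINT x|lborel. indicator {c..d} x * \<bar>f x\<bar>)
      \<le> (LINT x|lborel. (f x)\<^sup>2 / (2 * t) + t / 2 * indicator {c..d} x)"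
    using assms(3) by (intro integral_mono') (auto simp: indicator_def)
  also have "\<dots> = (LINT x|lborel. (f x)\<^sup>2) / (2 * t) + t / 2 * (d - c)"
    using assms(4) ind sq by simp
  also have "\<dots> \<le> A / (2 * t) + t * (d - c) / 2"
    using assms(2,3) by (simp add: divide_right_mono)
  finally show ?thesis .
qed

lemma AE_lborel_not_in_negligible: "negligible N \<Longrightarrow> AE x in lborel. x \<notin> N"
  by (metis AE_completion_iff AE_not_in negligible_iff_null_sets)

lemma H1_AE_square_le:
  assumes "H1 u g" "(LINT x|lborel. (u x)\<^sup>2) \<le> A" "(LINT x|lborel. (g x)\<^sup>2) \<le> A" "0 < A"
  shows "AE x in lborel. (u x)\<^sup>2 \<le> 9 * A"
proof -
  have L2: "L2 u" "L2 g" using assms(1) by (simp_all add: H1_def)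
  obtain N where "negligible N" and N: "\<And>a b. a \<notin> N \<Longrightarrow> b \<notin> N \<Longrightarrow> a \<le> b \<Longrightarrow>
      \<bar>u a - u b\<bar> \<le> (LINT y|lborel. indicator {a..b+2} y * \<bar>g y\<bar>)"
    using weak_deriv_increment_le[OF assms(1)] by blast
  from \<open>negligible N\<close> have AE_N: "AE x in lborel. x \<notin> N" by (rule AE_lborel_not_in_negligible)
  define t where "t = sqrt A"
  have t: "0 < t" "A / (2 * t) = t / 2"
    using assms(4) by (auto simp: t_def field_simps real_sqrt_mult[symmetric])
  show ?thesis
    using AE_N
  proof eventually_elim
    case (elim x)
    define C where "C = (LINT y|lborel. indicator {x..x+3} y * \<bar>g y\<bar>)"
    have "AE a in lborel. indicator {x..x+1} a * (\<bar>u x\<bar> - C) \<le> indicator {x..x+1} a * \<bar>u a\<bar>"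
      using AE_N
    proof eventually_elim
      case (elim a)
      show ?case
      proof (cases "a \<in> {x..x+1}")
        case True
        have "\<bar>u x - u a\<bar> \<le> (LINT y|lborel. indicator {x..a+2} y * \<bar>g y\<bar>)"
          using N[of x a] elim \<open>x \<notin> N\<close> True by simp
        also have "\<dots> \<le> C"
          unfolding C_def using True
          by (intro integral_mono L2_integrable_indicator_abs L2) (auto simp: indicator_def)
        finally show ?thesis using True by simp
      qed simp
    qed
    then have "(LINT a|lborel. indicator {x..x+1} a * (\<bar>u x\<bar> - C))
        \<le> (LINT a|lborel. indicator {x..x+1} a * \<bar>u a\<bar>)"
      by (intro integral_mono_AE integrable_mult_left L2_integrable_indicator_abs L2)
        (simp_all add: emeasure_lborel_Icc)
    moreover have "(LINT a|lborel. indicator {x..x+1} a * \<bar>u a\<bar>) \<le> A / (2 * t) + t * ((x + 1) - x) / 2"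
      by (intro integral_indicator_abs_le L2 assms(2) t(1)) simp
    moreover have "C \<le> A / (2 * t) + t * ((x + 3) - x) / 2"
      unfolding C_def by (intro integral_indicator_abs_le L2 assms(3) t(1)) simp
    ultimately have "\<bar>u x\<bar> \<le> 3 * t" using t(2) by simp
    then have "\<bar>u x\<bar>\<^sup>2 \<le> (3 * t)\<^sup>2" by (intro power_mono) auto
    then show ?case using assms(4) by (simp add: t_def power_mult_distrib)
  qed
qed

section \<open>The functional near zero and along rays\<close>

lemma abs_monomial_le:
  fixes u v :: real
  assumes "i + j = 2 * n"
  shows "\<bar>u ^ i * v ^ j\<bar> \<le> (u\<^sup>2 + v\<^sup>2) ^ n"
proof -
  let ?r = "sqrt (u\<^sup>2 + v\<^sup>2)"
  have "\<bar>u\<bar> \<le> ?r" "\<bar>v\<bar> \<le> ?r"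
    using real_sqrt_le_mono[of "u\<^sup>2" "u\<^sup>2 + v\<^sup>2"] real_sqrt_le_mono[of "v\<^sup>2" "u\<^sup>2 + v\<^sup>2"] by simp_all
  then have "\<bar>u\<bar> ^ i * \<bar>v\<bar> ^ j \<le> ?r ^ i * ?r ^ j"
    by (intro mult_mono power_mono) simp_all
  also have "\<dots> = ?r ^ (2 * n)"
    by (simp add: assms flip: power_add)
  also have "\<dots> = (u\<^sup>2 + v\<^sup>2) ^ n"
    by (simp add: power_mult)
  finally show ?thesis by (simp add: abs_mult power_abs)
qed

lemma Hfun_homogeneous: "Hfun k a b c d (l * u) (l * v) = l ^ (2 * k + 2) * Hfun k a b c d u v"
proof -
  have "l ^ (k * 2) = l ^ k * l ^ k"
    by (simp add: mult_2_right power_add)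
  then show ?thesis by (simp add: Hfun_def power_mult_distrib algebra_simps)
qed

lemma abs_Hfun_le:
  assumes "0 \<le> a" "0 \<le> b" "0 \<le> c" "0 \<le> d"
  shows "\<bar>Hfun k a b c d u v\<bar> \<le> ((a + b) / (real k + 1) + (c + d) / real k) * (u\<^sup>2 + v\<^sup>2) ^ (k + 1)"
proof -
  let ?s = "(u\<^sup>2 + v\<^sup>2) ^ (k + 1)"
  let ?A = "a / (2 * real k + 2) * (u ^ (2 * k + 2) + v ^ (2 * k + 2))"
  let ?B = "b / (real k + 1) * (u * v) ^ (k + 1)"
  let ?C = "c / real k * u ^ (k + 2) * v ^ k"
  let ?D = "d / real k * u ^ k * v ^ (k + 2)"
  have "\<bar>u ^ (2 * k + 2) * v ^ 0\<bar> \<le> ?s" "\<bar>u ^ 0 * v ^ (2 * k + 2)\<bar> \<le> ?s"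
    "\<bar>u ^ (k + 1) * v ^ (k + 1)\<bar> \<le> ?s" "\<bar>u ^ (k + 2) * v ^ k\<bar> \<le> ?s" "\<bar>u ^ k * v ^ (k + 2)\<bar> \<le> ?s"
    by (intro abs_monomial_le; simp)+
  then have "\<bar>?A\<bar> \<le> a / (real k + 1) * ?s" and "\<bar>?B\<bar> \<le> b / (real k + 1) * ?s"
    and "\<bar>?C\<bar> \<le> c / real k * ?s" and "\<bar>?D\<bar> \<le> d / real k * ?s"
  proof -
    assume "\<bar>u ^ (2 * k + 2) * v ^ 0\<bar> \<le> ?s" "\<bar>u ^ 0 * v ^ (2 * k + 2)\<bar> \<le> ?s"
    then have "\<bar>u ^ (2 * k + 2) + v ^ (2 * k + 2)\<bar> \<le> 2 * ?s" by simp
    then have "a / (2 * real k + 2) * \<bar>u ^ (2 * k + 2) + v ^ (2 * k + 2)\<bar> \<le> a / (2 * real k + 2) * (2 * ?s)"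
      using assms(1) by (intro mult_left_mono) simp_all
    moreover have "\<bar>?A\<bar> = a / (2 * real k + 2) * \<bar>u ^ (2 * k + 2) + v ^ (2 * k + 2)\<bar>"
      using assms(1) by (simp add: abs_mult)
    moreover have "a / (2 * real k + 2) * (2 * ?s) = a / (real k + 1) * ?s"
      by (simp add: field_simps)
    ultimately show "\<bar>?A\<bar> \<le> a / (real k + 1) * ?s" by linarith
  next
    assume "\<bar>u ^ (k + 1) * v ^ (k + 1)\<bar> \<le> ?s"
    then have "b / (real k + 1) * \<bar>u ^ (k + 1) * v ^ (k + 1)\<bar> \<le> b / (real k + 1) * ?s"
      using assms(2) by (intro mult_left_mono) simp_all
    moreover have "\<bar>?B\<bar> = b / (real k + 1) * \<bar>u ^ (k + 1) * v ^ (k + 1)\<bar>"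
      using assms(2) by (simp add: abs_mult power_mult_distrib)
    ultimately show "\<bar>?B\<bar> \<le> b / (real k + 1) * ?s" by linarith
  next
    assume "\<bar>u ^ (k + 2) * v ^ k\<bar> \<le> ?s"
    then show "\<bar>?C\<bar> \<le> c / real k * ?s"
      using mult_left_mono[of _ _ "c / real k"] assms(3) by (simp add: abs_mult mult.assoc)
  next
    assume "\<bar>u ^ k * v ^ (k + 2)\<bar> \<le> ?s"
    then show "\<bar>?D\<bar> \<le> d / real k * ?s"
      using mult_left_mono[of _ _ "d / real k"] assms(4) by (simp add: abs_mult mult.assoc)
  qed
  moreover have "\<bar>Hfun k a b c d u v\<bar> \<le> \<bar>?A\<bar> + \<bar>?B\<bar> + \<bar>?C\<bar> + \<bar>?D\<bar>"
    unfolding Hfun_def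
    using abs_triangle_ineq[of "?A + ?B + ?C" ?D] abs_triangle_ineq[of "?A + ?B" ?C] abs_triangle_ineq[of ?A ?B]
    by linarith
  moreover have "a / (real k + 1) * ?s + b / (real k + 1) * ?s + c / real k * ?s + d / real k * ?s
      = ((a + b) / (real k + 1) + (c + d) / real k) * ?s"
    by (simp add: add_divide_distrib distrib_right)
  ultimately show ?thesis by linarith
qed

text \<open>No integrability is needed: a non-integrable integrand has Bochner integral \<open>0\<close> on both sides.\<close>

lemma Ifun_scale:
  "Ifun k a b c d (\<lambda>x. l * u x) (\<lambda>x. l * u' x) (\<lambda>x. l * v x) (\<lambda>x. l * v' x)
   = l\<^sup>2 / 2 * H1_norm2 u u' v v' - l ^ (2 * k + 2) * (LINT x|lborel. Hfun k a b c d (u x) (v x))"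
  by (simp add: Ifun_def H1_norm2_def Hfun_homogeneous power_mult_distrib flip: distrib_left)

lemma H1_norm2_eq_sum:
  assumes "H1 u u'" "H1 v v'"
  shows "H1_norm2 u u' v v' = (LINT x|lborel. (u x)\<^sup>2) + (LINT x|lborel. (v x)\<^sup>2)
    + (LINT x|lborel. (u' x)\<^sup>2) + (LINT x|lborel. (v' x)\<^sup>2)"
  using assms by (simp add: H1_norm2_def H1_def L2_def)

lemma integral_growth_le_H1_norm2_power:
  fixes G :: "real \<Rightarrow> real \<Rightarrow> real" and k :: nat
  assumes "H1 u u'" "H1 v v'" "0 < H1_norm2 u u' v v'"
    and "0 \<le> M" "\<And>s t. G s t \<le> M * (s\<^sup>2 + t\<^sup>2) ^ (k + 1)"
  shows "(LINT x|lborel. G (u x) (v x)) \<le> M * 18 ^ k * H1_norm2 u u' v v' ^ (k + 1)"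
proof -
  define A where "A = H1_norm2 u u' v v'"
  have sq: "integrable lborel (\<lambda>x. (u x)\<^sup>2)" "integrable lborel (\<lambda>x. (v x)\<^sup>2)"
    using assms(1,2) by (simp_all add: H1_def L2_def)
  have nonneg: "0 \<le> (LINT x|lborel. (f x)\<^sup>2)" for f :: "real \<Rightarrow> real" by simp
  have le_A: "(LINT x|lborel. (u x)\<^sup>2) \<le> A" "(LINT x|lborel. (u' x)\<^sup>2) \<le> A"
      "(LINT x|lborel. (v x)\<^sup>2) \<le> A" "(LINT x|lborel. (v' x)\<^sup>2) \<le> A"
    and le_A': "(LINT x|lborel. (u x)\<^sup>2) + (LINT x|lborel. (v x)\<^sup>2) \<le> A"
    using H1_norm2_eq_sum[OF assms(1,2)] nonneg[of u] nonneg[of v] nonneg[of u'] nonneg[of v']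
    unfolding A_def by linarith+
  have "AE x in lborel. (u x)\<^sup>2 \<le> 9 * A" "AE x in lborel. (v x)\<^sup>2 \<le> 9 * A"
    using assms(3) le_A by (auto intro!: H1_AE_square_le assms(1,2) simp: A_def)
  then have "AE x in lborel. G (u x) (v x) \<le> M * (18 * A) ^ k * ((u x)\<^sup>2 + (v x)\<^sup>2)"
  proof eventually_elim
    case (elim x)
    let ?s = "(u x)\<^sup>2 + (v x)\<^sup>2"
    have "G (u x) (v x) \<le> M * (?s * ?s ^ k)" using assms(5) by simp
    also have "\<dots> \<le> M * (?s * (18 * A) ^ k)"
      using elim by (intro mult_left_mono power_mono assms(4)) simp_all
    finally show ?case by (simp add: mult_ac)
  qed
  then have "(LINT x|lborel. G (u x) (v x)) \<le> (LINT x|lborel. M * (18 * A) ^ k * ((u x)\<^sup>2 + (v x)\<^sup>2))"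
    using assms(3,4) sq by (intro integral_mono_AE') (simp_all add: A_def)
  also have "\<dots> = M * (18 * A) ^ k * ((LINT x|lborel. (u x)\<^sup>2) + (LINT x|lborel. (v x)\<^sup>2))"
    using sq by simp
  also have "\<dots> \<le> M * (18 * A) ^ k * A"
    using le_A' assms(3,4) by (intro mult_left_mono) (simp_all add: A_def)
  also have "\<dots> = M * 18 ^ k * A ^ (k + 1)"
    by (simp add: power_mult_distrib)
  finally show ?thesis by (simp add: A_def)
qed

lemma Ifun_zero: "Ifun k a b c d (\<lambda>_. 0) (\<lambda>_. 0) (\<lambda>_. 0) (\<lambda>_. 0) = 0"
  by (simp add: Ifun_def Hfun_def)

lemma Ifun_strict_local_min_zero:
  fixes k :: nat and a b c d :: real
  assumes "1 \<le> k" "0 \<le> a" "0 \<le> b" "0 \<le> c" "0 \<le> d"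
  shows "\<exists>r>0. \<forall>u u' v v'. H1 u u' \<longrightarrow> H1 v v' \<longrightarrow>
      0 < H1_norm2 u u' v v' \<longrightarrow> sqrt (H1_norm2 u u' v v') < r \<longrightarrow>
      Ifun k a b c d u u' v v' > Ifun k a b c d (\<lambda>_. 0) (\<lambda>_. 0) (\<lambda>_. 0) (\<lambda>_. 0)"
proof -
  define M where "M = (a + b) / (real k + 1) + (c + d) / real k"
  define K where "K = M * 18 ^ k"
  define r where "r = 1 / (2 * K + 1)"
  have "0 \<le> M" using assms by (simp add: M_def)
  then have K: "0 \<le> K" by (simp add: K_def)
  then have r: "0 < r" "r \<le> 1" "K * r < 1 / 2" by (simp_all add: r_def field_simps)
  have growth: "Hfun k a b c d s t \<le> M * (s\<^sup>2 + t\<^sup>2) ^ (k + 1)" for s t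
    using abs_Hfun_le[OF assms(2-5), of k s t] by (simp add: M_def abs_le_iff)
  have "Ifun k a b c d u u' v v' > 0"
    if "H1 u u'" "H1 v v'" "0 < H1_norm2 u u' v v'" "sqrt (H1_norm2 u u' v v') < r" for u u' v v'
  proof -
    define A where "A = H1_norm2 u u' v v'"
    have A: "0 < A" using that(3) by (simp add: A_def)
    have "A < r\<^sup>2"
      using power_strict_mono[OF that(4), of 2] A by (simp add: A_def)
    also have "r\<^sup>2 \<le> r" using r by (simp add: power2_eq_square mult_left_le)
    finally have "A < r" .
    then have "A ^ k \<le> A" using power_decreasing[of 1 k A] assms(1) A r(2) by simp
    then have "K * A ^ k < 1 / 2"
      using \<open>A < r\<close> r(3) K mult_left_mono[of "A ^ k" r K] by linarith
    then have "K * A ^ k * A < 1 / 2 * A" using A by (intro mult_strict_right_mono)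
    moreover have "(LINT x|lborel. Hfun k a b c d (u x) (v x)) \<le> K * A ^ k * A"
      using integral_growth_le_H1_norm2_power[OF that(1-3) \<open>0 \<le> M\<close> growth]
      by (simp add: K_def A_def mult_ac)
    ultimately show ?thesis by (simp add: Ifun_def A_def H1_norm2_def)
  qed
  then show ?thesis using r(1) by (auto simp: Ifun_zero)
qed

lemma H1_norm2_pos:
  assumes "H1 u u'" "H1 v v'" "\<not> (AE x in lborel. u x = 0 \<and> v x = 0)"
  shows "0 < H1_norm2 u u' v v'"
proof -
  let ?Q = "\<lambda>x. (u x)\<^sup>2 + (v x)\<^sup>2 + (u' x)\<^sup>2 + (v' x)\<^sup>2"
  have Q: "integrable lborel ?Q"
    using assms(1,2) by (simp add: H1_def L2_def)
  have "H1_norm2 u u' v v' \<noteq> 0"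
  proof
    assume "H1_norm2 u u' v v' = 0"
    then have "AE x in lborel. ?Q x = 0"
      using integral_nonneg_eq_0_iff_AE[OF Q] by (simp add: H1_norm2_def)
    then have "AE x in lborel. u x = 0 \<and> v x = 0"
      by eventually_elim (simp add: add_nonneg_eq_0_iff)
    with assms(3) show False by blast
  qed
  moreover have "0 \<le> H1_norm2 u u' v v'" by (simp add: H1_norm2_def)
  ultimately show ?thesis by linarith
qed

lemma Nehari_H1_norm2_eq:
  assumes "Nehari k a b c d u u' v v'"
  shows "H1_norm2 u u' v v' = (2 * real k + 2) * (LINT x|lborel. Hfun k a b c d (u x) (v x))"
proof -
  define A where "A = H1_norm2 u u' v v'"
  define B where "B = (LINT x|lborel. Hfun k a b c d (u x) (v x))"
  have "Ifun k a b c d (\<lambda>x. u x + t * u x) (\<lambda>x. u' x + t * u' x) (\<lambda>x. v x + t * v x) (\<lambda>x. v' x + t * v' x)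
      = (1 + t)\<^sup>2 / 2 * A - (1 + t) ^ (2 * k + 2) * B" for t
  proof -
    have "(\<lambda>x. f x + t * f x) = (\<lambda>x. (1 + t) * f x)" for f :: "real \<Rightarrow> real"
      by (simp add: algebra_simps)
    then show ?thesis by (simp only: Ifun_scale A_def B_def)
  qed
  then have "((\<lambda>t. (1 + t)\<^sup>2 / 2 * A - (1 + t) ^ (2 * k + 2) * B) has_real_derivative 0) (at 0)"
    using assms by (simp add: Nehari_def)
  moreover have "((\<lambda>t. (1 + t)\<^sup>2 / 2 * A - (1 + t) ^ (2 * k + 2) * B) has_real_derivative
      A - real (2 * k + 2) * B) (at 0)"
    by (auto intro!: derivative_eq_intros)
  ultimately have "A - real (2 * k + 2) * B = 0" by (rule DERIV_unique[rotated])
  then show ?thesis by (simp add: A_def B_def)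
qed

lemma Nehari_eventually_Ifun_neg:
  assumes "1 \<le> k" "Nehari k a b c d u u' v v'"
  shows "\<forall>\<^sub>F l in at_top. Ifun k a b c d (\<lambda>x. l * u x) (\<lambda>x. l * u' x) (\<lambda>x. l * v x) (\<lambda>x. l * v' x) < 0"
proof (rule eventually_mono[OF eventually_ge_at_top[of "real k + 2"]])
  fix l :: real assume l: "real k + 2 \<le> l"
  define A where "A = H1_norm2 u u' v v'"
  have "0 < A"
    using assms(2) by (auto simp: A_def Nehari_def intro: H1_norm2_pos)
  have "l ^ 1 \<le> l ^ (2 * k)" using assms(1) l by (intro power_increasing) auto
  then have "(real k + 1) * l\<^sup>2 < l ^ (2 * k) * l\<^sup>2" using l by (intro mult_strict_right_mono) auto
  then have "A / (2 * real k + 2) * ((real k + 1) * l\<^sup>2) < A / (2 * real k + 2) * (l ^ (2 * k) * l\<^sup>2)"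
    using \<open>0 < A\<close> by (intro mult_strict_left_mono) auto
  moreover have "A / (2 * real k + 2) * ((real k + 1) * l\<^sup>2) = l\<^sup>2 / 2 * A"
    by (simp add: field_simps)
  moreover have "l ^ (2 * k + 2) * (LINT x|lborel. Hfun k a b c d (u x) (v x))
      = A / (2 * real k + 2) * (l ^ (2 * k) * l\<^sup>2)"
    using Nehari_H1_norm2_eq[OF assms(2)] by (simp add: A_def power_add power2_eq_square field_simps)
  moreover have "Ifun k a b c d (\<lambda>x. l * u x) (\<lambda>x. l * u' x) (\<lambda>x. l * v x) (\<lambda>x. l * v' x)
      = l\<^sup>2 / 2 * A - l ^ (2 * k + 2) * (LINT x|lborel. Hfun k a b c d (u x) (v x))"
    by (simp only: Ifun_scale A_def)
  ultimately show "Ifun k a b c d (\<lambda>x. l * u x) (\<lambda>x. l * u' x) (\<lambda>x. l * v x) (\<lambda>x. l * v' x) < 0"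
    by linarith
qed

theorem lemma3p15:
  fixes k :: nat and a b c d :: real
  assumes "k \<ge> 1" and "a \<ge> 0" and "b \<ge> 0" and "c \<ge> 0" and "d \<ge> 0"
  shows "(\<exists>r>0. \<forall>u u' v v'. H1 u u' \<longrightarrow> H1 v v' \<longrightarrow>
              0 < H1_norm2 u u' v v' \<longrightarrow> sqrt (H1_norm2 u u' v v') < r \<longrightarrow>
              Ifun k a b c d u u' v v' > Ifun k a b c d (\<lambda>_. 0) (\<lambda>_. 0) (\<lambda>_. 0) (\<lambda>_. 0))
       \<and> (\<forall>u u' v v'. Nehari k a b c d u u' v v' \<longrightarrow>
              (\<forall>\<^sub>F l in at_top. Ifun k a b c d (\<lambda>x. l * u x) (\<lambda>x. l * u' x)
                                        (\<lambda>x. l * v x) (\<lambda>x. l * v' x) < 0))"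
  using Ifun_strict_local_min_zero[OF assms] Nehari_eventually_Ifun_neg[OF assms(1)] by blast

end
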